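(* Let $\mathcal{C}$ be a covering of a finite set $E$ and let $SH(X)=\bigcup\{K\in\mathcal{C}:K\cap X\neq\emptyset\}$ for $X\subseteq E$. Then $\mathcal{C}$ satisfies the condition (TRA): for all $x,y,z\in E$, if there are $K_1,K_2\in\mathcal{C}$ with $x,z\in K_1$ and $y,z\in K_2$, then there exists $K_3\in\mathcal{C}$ with $x,y\in K_3$; if and only if $SH$ is the closure operator of some matroid on $E$.
   Context: A covering of $E$ is a family of nonempty subsets of $E$ with union $E$. The closure operator of a matroid with rank function $r$ is $cl(X)=\{a\in E:r(X\cup\{a\})=r(X)\}$. *)

theory Defs
  imports Main
begin

definition covering :: "'a set \<Rightarrow> 'a set set \<Rightarrow> bool" where
  "covering E C \<longleftrightarrow> (\<forall>K\<in>C. K \<noteq> {} \<and> K \<subseteq> E) \<and> \<Union>C = E"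

definition SH :: "'a set set \<Rightarrow> 'a set \<Rightarrow> 'a set" where
  "SH C X = \<Union>{K\<in>C. K \<inter> X \<noteq> {}}"

definition TRA :: "'a set \<Rightarrow> 'a set set \<Rightarrow> bool" where
  "TRA E C \<longleftrightarrow> (\<forall>x\<in>E. \<forall>y\<in>E. \<forall>z\<in>E.
     (\<exists>K1\<in>C. \<exists>K2\<in>C. x \<in> K1 \<and> z \<in> K1 \<and> y \<in> K2 \<and> z \<in> K2)
       \<longrightarrow> (\<exists>K3\<in>C. x \<in> K3 \<and> y \<in> K3))"

definition matroid_rank :: "'a set \<Rightarrow> ('a set \<Rightarrow> nat) \<Rightarrow> bool" where
  "matroid_rank E r \<longleftrightarrow>
     (\<forall>X. X \<subseteq> E \<longrightarrow> r X \<le> card X) \<and>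
     (\<forall>X Y. X \<subseteq> Y \<and> Y \<subseteq> E \<longrightarrow> r X \<le> r Y) \<and>
     (\<forall>X Y. X \<subseteq> E \<and> Y \<subseteq> E \<longrightarrow> r (X \<union> Y) + r (X \<inter> Y) \<le> r X + r Y)"

definition matroid_cl :: "'a set \<Rightarrow> ('a set \<Rightarrow> nat) \<Rightarrow> 'a set \<Rightarrow> 'a set" where
  "matroid_cl E r X = {a\<in>E. r (X \<union> {a}) = r X}"

end

theory Submission
  imports Defs
begin

text \<open>Both conditions say that "lying in a common block" is an equivalence relation on E.
If it is, counting the classes met by X is a matroid rank whose closure of X is the union
of those classes, i.e. SH X. Conversely, if SH is a matroid closure then SH {} = {} makes
the matroid loopless, the blocks through z consist of the elements parallel to z, and
parallelism in a loopless matroid is transitive by submodularity of the rank.\<close>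

definition same_block :: "'a set set \<Rightarrow> 'a \<Rightarrow> 'a \<Rightarrow> bool" where
  "same_block C x y \<longleftrightarrow> (\<exists>K\<in>C. x \<in> K \<and> y \<in> K)"

lemma SH_iff: "a \<in> SH C X \<longleftrightarrow> (\<exists>x\<in>X. same_block C x a)"
  unfolding SH_def same_block_def by blast

lemma same_block_sym: "same_block C x y \<Longrightarrow> same_block C y x"
  unfolding same_block_def by blast

lemma same_block_refl: "covering E C \<Longrightarrow> x \<in> E \<Longrightarrow> same_block C x x"
  unfolding covering_def same_block_def by blast

lemma same_block_in_carrier: "covering E C \<Longrightarrow> same_block C x y \<Longrightarrow> x \<in> E \<and> y \<in> E"
  unfolding covering_def same_block_def by blast

lemma TRA_iff_same_block_trans:
  assumes "covering E C"
  shows "TRA E C \<longleftrightarrow> (\<forall>x y z. same_block C x z \<longrightarrow> same_block C z y \<longrightarrow> same_block C x y)"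
proof
  assume "TRA E C"
  then show "\<forall>x y z. same_block C x z \<longrightarrow> same_block C z y \<longrightarrow> same_block C x y"
    using same_block_in_carrier[OF assms] unfolding TRA_def same_block_def by meson
next
  assume "\<forall>x y z. same_block C x z \<longrightarrow> same_block C z y \<longrightarrow> same_block C x y"
  then show "TRA E C"
    unfolding TRA_def same_block_def by blast
qed

lemma matroid_rank_card_image:
  assumes "finite E"
  shows "matroid_rank E (\<lambda>X. card (f ` X))"
  unfolding matroid_rank_def
proof (intro conjI allI impI)
  fix X assume "X \<subseteq> E"
  then show "card (f ` X) \<le> card X"
    using assms by (intro card_image_le) (rule finite_subset)
next
  fix X Y assume "X \<subseteq> Y \<and> Y \<subseteq> E"
  then have "finite (f ` Y)" and "f ` X \<subseteq> f ` Y"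
    using assms finite_subset by blast+
  then show "card (f ` X) \<le> card (f ` Y)"
    by (rule card_mono)
next
  fix X Y assume "X \<subseteq> E \<and> Y \<subseteq> E"
  then have fin: "finite (f ` X)" "finite (f ` Y)"
    using assms finite_subset by blast+
  have "card (f ` (X \<inter> Y)) \<le> card (f ` X \<inter> f ` Y)"
    using fin by (intro card_mono) (auto simp: image_Int_subset)
  then show "card (f ` (X \<union> Y)) + card (f ` (X \<inter> Y)) \<le> card (f ` X) + card (f ` Y)"
    using card_Un_Int[OF fin] by (simp add: image_Un)
qed

lemma matroid_cl_card_image:
  assumes "finite X"
  shows "matroid_cl E (\<lambda>X. card (f ` X)) X = {a\<in>E. f a \<in> f ` X}"
  unfolding matroid_cl_def using assms by (simp add: card_insert_if) blast

lemma SH_eq_matroid_cl_if_TRA: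
  assumes "finite E" and cov: "covering E C" and "TRA E C"
  obtains r where "matroid_rank E r" and "\<And>X. X \<subseteq> E \<Longrightarrow> SH C X = matroid_cl E r X"
proof
  define block where "block x = {y. same_block C x y}" for x
  have trans: "\<And>x y z. same_block C x z \<Longrightarrow> same_block C z y \<Longrightarrow> same_block C x y"
    using \<open>TRA E C\<close> unfolding TRA_iff_same_block_trans[OF cov] by blast
  have block_eq: "block a = block x \<longleftrightarrow> same_block C x a" if "a \<in> E" for a x
  proof
    assume "block a = block x"
    then show "same_block C x a"
      using same_block_refl[OF cov \<open>a \<in> E\<close>] unfolding block_def by blast
  next
    assume xa: "same_block C x a"
    have "same_block C a y \<longleftrightarrow> same_block C x y" for y
      using xa same_block_sym trans by meson
    then show "block a = block x"
      unfolding block_def by blast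
  qed
  show "matroid_rank E (\<lambda>X. card (block ` X))"
    using \<open>finite E\<close> by (rule matroid_rank_card_image)
  fix X assume "X \<subseteq> E"
  then have "matroid_cl E (\<lambda>X. card (block ` X)) X = {a\<in>E. block a \<in> block ` X}"
    using \<open>finite E\<close> by (intro matroid_cl_card_image) (rule finite_subset)
  also have "\<dots> = SH C X"
  proof (rule set_eqI)
    fix a
    show "a \<in> {a\<in>E. block a \<in> block ` X} \<longleftrightarrow> a \<in> SH C X"
    proof (cases "a \<in> E")
      case True
      then show ?thesis
        using block_eq[OF True] by (auto simp: SH_iff)
    next
      case False
      then show ?thesis
        using same_block_in_carrier[OF cov] by (auto simp: SH_iff)
    qed
  qed
  finally show "SH C X = matroid_cl E (\<lambda>X. card (block ` X)) X" ..
qed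

context
  fixes E :: "'a set" and r :: "'a set \<Rightarrow> nat"
  assumes mr: "matroid_rank E r"
begin

lemma matroid_rank_le_card: "X \<subseteq> E \<Longrightarrow> r X \<le> card X"
  using mr unfolding matroid_rank_def by blast

lemma matroid_rank_mono: "X \<subseteq> Y \<Longrightarrow> Y \<subseteq> E \<Longrightarrow> r X \<le> r Y"
  using mr unfolding matroid_rank_def by blast

lemma matroid_rank_submod: "X \<subseteq> E \<Longrightarrow> Y \<subseteq> E \<Longrightarrow> r (X \<union> Y) + r (X \<inter> Y) \<le> r X + r Y"
  using mr unfolding matroid_rank_def by blast

lemma matroid_rank_singleton_nonloop:
  assumes "a \<in> E" "a \<notin> matroid_cl E r {}"
  shows "r {a} = 1"
proof -
  have "r {} = 0"
    using matroid_rank_le_card[of "{}"] by simp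
  then have "r {a} \<noteq> 0"
    using assms unfolding matroid_cl_def by simp
  moreover have "r {a} \<le> 1"
    using matroid_rank_le_card[of "{a}"] \<open>a \<in> E\<close> by simp
  ultimately show ?thesis by simp
qed

lemma matroid_cl_singleton_trans:
  assumes "x \<in> E" "z \<in> E" and rx: "r {x} = 1" and rz: "r {z} = 1"
    and x: "x \<in> matroid_cl E r {z}" and y: "y \<in> matroid_cl E r {z}"
  shows "y \<in> matroid_cl E r {x}"
proof -
  have "y \<in> E" using y unfolding matroid_cl_def by simp
  then have sub: "{z, x} \<subseteq> E" "{z, y} \<subseteq> E" "{x, y} \<subseteq> E"
    using \<open>x \<in> E\<close> \<open>z \<in> E\<close> by auto
  have rzx: "r {z, x} = 1" and rzy: "r {z, y} = 1"
    using x y rz unfolding matroid_cl_def by (simp_all add: insert_commute)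
  have "r {z} \<le> r ({z, x} \<inter> {z, y})"
    using matroid_rank_mono[of "{z}" "{z, x} \<inter> {z, y}"] sub by auto
  then have "r ({z, x} \<union> {z, y}) \<le> 1"
    using matroid_rank_submod[OF sub(1,2)] rzx rzy rz by simp
  then have "r {x, y} \<le> 1"
    using matroid_rank_mono[of "{x, y}" "{z, x} \<union> {z, y}"] sub by auto
  moreover have "r {x} \<le> r {x, y}"
    using matroid_rank_mono[of "{x}" "{x, y}"] sub by auto
  ultimately have "r {x, y} = r {x}"
    using rx by simp
  then show ?thesis
    using \<open>y \<in> E\<close> unfolding matroid_cl_def by (simp add: insert_commute)
qed

end

lemma TRA_if_SH_eq_matroid_cl:
  assumes cov: "covering E C" and mr: "matroid_rank E r"
    and cl: "\<And>X. X \<subseteq> E \<Longrightarrow> SH C X = matroid_cl E r X"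
  shows "TRA E C"
  unfolding TRA_iff_same_block_trans[OF cov]
proof (intro allI impI)
  fix x y z assume xz: "same_block C x z" and zy: "same_block C z y"
  then have E: "x \<in> E" "z \<in> E"
    using same_block_in_carrier[OF cov] by blast+
  have "x \<in> SH C {z}" "y \<in> SH C {z}"
    using same_block_sym[OF xz] zy by (simp_all add: SH_iff)
  then have "x \<in> matroid_cl E r {z}" "y \<in> matroid_cl E r {z}"
    using cl[of "{z}"] E by simp_all
  moreover have "matroid_cl E r {} = {}"
    using cl[of "{}"] by (simp add: SH_def)
  then have "r {a} = 1" if "a \<in> E" for a
    using matroid_rank_singleton_nonloop[OF mr that] by simp
  ultimately have "y \<in> SH C {x}"
    using matroid_cl_singleton_trans[OF mr E] cl[of "{x}"] E by simp
  then show "same_block C x y"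
    by (simp add: SH_iff)
qed

theorem theorem9:
  fixes E :: "'a set" and C :: "'a set set"
  assumes "finite E" and "covering E C"
  shows "TRA E C \<longleftrightarrow>
    (\<exists>r. matroid_rank E r \<and> (\<forall>X. X \<subseteq> E \<longrightarrow> SH C X = matroid_cl E r X))"
proof
  assume "TRA E C"
  then obtain r where "matroid_rank E r" "\<And>X. X \<subseteq> E \<Longrightarrow> SH C X = matroid_cl E r X"
    using SH_eq_matroid_cl_if_TRA assms by blast
  then show "\<exists>r. matroid_rank E r \<and> (\<forall>X. X \<subseteq> E \<longrightarrow> SH C X = matroid_cl E r X)"
    by blast
next
  assume "\<exists>r. matroid_rank E r \<and> (\<forall>X. X \<subseteq> E \<longrightarrow> SH C X = matroid_cl E r X)"
  then show "TRA E C"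
    using TRA_if_SH_eq_matroid_cl[OF assms(2)] by blast
qed

end
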